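(* Let $a,b,n$ be positive integers and $h(j)=aj^n+b$ for $j\ge0$, $h(j)=0$ for $j<0$. Then: (1) if $a<3b$, then $\operatorname{hdepth}(h)=\lfloor a/b\rfloor+1$; (2) if $a\ge 3b$, then $\operatorname{hdepth}(h)\ge 3$.
   Context: For a nonzero function $h:\mathbb Z\to\mathbb Z_{\ge 0}$ with $h(j)=0$ for all sufficiently negative $j$, and integers $k\le d$, set $\beta_k^d(h)=\sum_{j\le k}(-1)^{k-j}\binom{d-j}{k-j}h(j)$, and $\operatorname{hdepth}(h)=\max\{d\in\mathbb Z:\ \beta_k^d(h)\ge 0\text{ for all integers }k\le d\}$. *)

theory Defs
  imports Main
begin

text \<open>The sum ranges over the finite support of h below k (h vanishes for sufficiently
  negative j), which equals the informal (finitely supported) sum.\<close>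
definition beta :: "int \<Rightarrow> int \<Rightarrow> (int \<Rightarrow> int) \<Rightarrow> int" where
  "beta k d h = (\<Sum>j | j \<le> k \<and> h j \<noteq> 0.
      (-1) ^ nat (k - j) * int (nat (d - j) choose nat (k - j)) * h j)"

definition hdepth :: "(int \<Rightarrow> int) \<Rightarrow> int" where
  "hdepth h = (GREATEST d::int. \<forall>k\<le>d. beta k d h \<ge> 0)"

end

theory Submission
  imports Defs
begin

text \<open>Since h vanishes on negative arguments, \<open>\<beta>\<^sub>1\<^sup>d(h) = h(1) - d h(0) = a + b - d b\<close>, which is
  nonnegative exactly for \<open>d \<le> a/b + 1\<close>; this bounds the depth by \<open>\<lfloor>a/b\<rfloor> + 1\<close>. Conversely,
  for \<open>d \<le> 3\<close> the only further conditions are \<open>\<beta>\<^sub>2\<^sup>2, \<beta>\<^sub>2\<^sup>3, \<beta>\<^sub>3\<^sup>3 \<ge> 0\<close>, which follow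
  from h being nondecreasing and convex on \<open>{0,1,2,3}\<close>.\<close>

lemma beta_eq_sum_atLeastAtMost:
  assumes "\<And>j. j < 0 \<Longrightarrow> h j = 0"
  shows "beta k d h = (\<Sum>j=0..k. (-1) ^ nat (k - j) * int (nat (d - j) choose nat (k - j)) * h j)"
  unfolding beta_def
proof (rule sum.mono_neutral_left)
  show "{j. j \<le> k \<and> h j \<noteq> 0} \<subseteq> {0..k}"
    using assms by (auto simp: not_less[symmetric])
qed auto

lemma
  assumes "\<And>j. j < 0 \<Longrightarrow> h j = 0"
  shows beta_neg: "k < 0 \<Longrightarrow> beta k d h = 0"
    and beta_0: "0 \<le> d \<Longrightarrow> beta 0 d h = h 0"
    and beta_1: "1 \<le> d \<Longrightarrow> beta 1 d h = h 1 - d * h 0"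
    and beta_2_2: "beta 2 2 h = h 2 - h 1 + h 0"
    and beta_2_3: "beta 2 3 h = h 2 - 2 * h 1 + 3 * h 0"
    and beta_3_3: "beta 3 3 h = h 3 - h 2 + h 1 - h 0"
proof -
  have "{0..1::int} = {0, 1}" "{0..2::int} = {0, 1, 2}" "{0..3::int} = {0, 1, 2, 3}"
    by auto
  then show "k < 0 \<Longrightarrow> beta k d h = 0" "0 \<le> d \<Longrightarrow> beta 0 d h = h 0"
    "1 \<le> d \<Longrightarrow> beta 1 d h = h 1 - d * h 0" "beta 2 2 h = h 2 - h 1 + h 0"
    "beta 2 3 h = h 2 - 2 * h 1 + 3 * h 0" "beta 3 3 h = h 3 - h 2 + h 1 - h 0"
    by (simp_all add: beta_eq_sum_atLeastAtMost[OF assms] numeral_eq_Suc algebra_simps)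
qed

lemma Greatest_int_ge:
  fixes P :: "int \<Rightarrow> bool"
  assumes "P k" and "\<And>d. P d \<Longrightarrow> d \<le> M"
  shows "k \<le> (GREATEST d. P d)"
proof -
  define S where "S = {d. P d \<and> k \<le> d}"
  have "finite S" "k \<in> S"
    using assms by (auto simp: S_def intro: finite_subset[of _ "{k..M}"])
  then have "Max S \<in> S" "k \<le> Max S" by (auto intro: Max_in)
  moreover have "(GREATEST d. P d) = Max S"
  proof (rule Greatest_equality)
    show "P (Max S)" using \<open>Max S \<in> S\<close> by (simp add: S_def)
  next
    fix d assume "P d"
    then show "d \<le> Max S"
      using \<open>finite S\<close> \<open>k \<le> Max S\<close> by (cases "k \<le> d") (auto simp: S_def)
  qed
  ultimately show ?thesis by simp
qed

context
  fixes a b n :: nat and h :: "int \<Rightarrow> int"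
  assumes pos: "a > 0" "b > 0" "n > 0"
    and h_def: "\<And>j. h j = (if j \<ge> 0 then int a * j ^ n + int b else 0)"
begin

lemma h_neg: "j < 0 \<Longrightarrow> h j = 0"
  by (simp add: h_def)

lemma h_0: "h 0 = int b"
  using pos(3) by (simp add: h_def)

lemma h_1: "h 1 = int a + int b"
  by (simp add: h_def)

lemma betas_nonneg_small_depth:
  assumes "1 \<le> d" "d \<le> 3" "(d - 1) * int b \<le> int a"
  shows "\<forall>k\<le>d. 0 \<le> beta k d h"
proof (intro allI impI)
  fix k assume "k \<le> d"
  have "(2::int) ^ 1 \<le> 2 ^ n" using pos(3) by (intro power_increasing) auto
  then have two: "int a * 2 \<le> int a * 2 ^ n" by (intro mult_left_mono) auto
  have three: "int a * 2 ^ n \<le> int a * 3 ^ n" by (intro mult_left_mono power_mono) auto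
  consider "k < 0" | "k = 0" | "k = 1" | "k = 2" "d = 2" | "k = 2" "d = 3" | "k = 3" "d = 3"
    using \<open>k \<le> d\<close> assms(1,2) by linarith
  then show "0 \<le> beta k d h"
  proof cases
    case 1 then show ?thesis by (simp add: beta_neg[OF h_neg])
  next
    case 2 then show ?thesis using assms by (simp add: beta_0[OF h_neg] h_0)
  next
    case 3 then show ?thesis using assms by (simp add: beta_1[OF h_neg] h_0 h_1 algebra_simps)
  next
    case 4 then show ?thesis using two by (simp add: beta_2_2[OF h_neg] h_0 h_1 h_def[of 2])
  next
    case 5 then show ?thesis using two by (simp add: beta_2_3[OF h_neg] h_0 h_1 h_def[of 2])
  next
    case 6 then show ?thesis using three by (simp add: beta_3_3[OF h_neg] h_0 h_1 h_def[of 2] h_def[of 3])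
  qed
qed

lemma depth_le_if_betas_nonneg:
  assumes "\<forall>k\<le>d. 0 \<le> beta k d h"
  shows "d \<le> int (a div b) + 1"
proof (cases "d \<le> 0")
  case False
  then have "0 \<le> beta 1 d h" using assms by simp
  then have "(d - 1) * int b \<le> int a"
    using False by (simp add: beta_1[OF h_neg] h_0 h_1 algebra_simps)
  then have "(d - 1) * int b div int b \<le> int a div int b"
    using pos(2) by (intro zdiv_mono1) auto
  then have "d - 1 \<le> int a div int b"
    using pos(2) by simp
  then show ?thesis by (simp add: zdiv_int)
qed simp

end

theorem proposition3p3:
  fixes a b n :: nat and h :: "int \<Rightarrow> int"
  assumes "a > 0" "b > 0" "n > 0"
    and "\<And>j. h j = (if j \<ge> 0 then int a * j ^ n + int b else 0)"
  shows "(a < 3 * b \<longrightarrow> hdepth h = int (a div b) + 1)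
       \<and> (a \<ge> 3 * b \<longrightarrow> hdepth h \<ge> 3)"
proof (intro conjI impI)
  assume "a < 3 * b"
  then have "a div b < 3" using assms(2) by (simp add: div_less_iff_less_mult)
  moreover have "int (a div b) * int b \<le> int a"
    by (metis div_times_less_eq_dividend of_nat_le_iff of_nat_mult)
  ultimately have "\<forall>k\<le>int (a div b) + 1. 0 \<le> beta k (int (a div b) + 1) h"
    by (intro betas_nonneg_small_depth[OF assms]) auto
  then show "hdepth h = int (a div b) + 1"
    unfolding hdepth_def by (intro Greatest_equality) (auto dest: depth_le_if_betas_nonneg[OF assms])
next
  assume "a \<ge> 3 * b"
  then have "\<forall>k\<le>3. 0 \<le> beta k 3 h"
    by (intro betas_nonneg_small_depth[OF assms]) auto
  then show "hdepth h \<ge> 3"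
    unfolding hdepth_def by (rule Greatest_int_ge) (rule depth_le_if_betas_nonneg[OF assms])
qed

end
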